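(* Consider the algorithm described in the context, and suppose it does not terminate finitely. Then one of the following two cases occurs. (i) There exists $\bar\tau_{\min}>0$ such that $\tau_k\ge\bar\tau_{\min}$ for all $k\in\mathbb{N}$. In this case $\alpha_k\ge\bar\alpha_{\min}:=\min\{\alpha_0,\ \xi\bar\tau_{\min}/(\bar\tau_{\min}L_g+L_J)\}$ for all $k\in\mathbb{N}$, and for a given $\epsilon>0$ the maximum number of iterations before $\bar\chi_k\le\epsilon$ is $$\Big(\max\Big\{0,\Big\lceil\frac{\log\big(\bar\tau_{\min}/(\alpha_0(\bar\tau_{\min}L_g+L_J))\big)}{\log\xi}\Big\rceil\Big\}+1\Big)\Big\lfloor\frac{\tau_0\big(f(x_0)-f_{\inf}+r(x_0)\big)+\|c(x_0)\|_2}{\bar\kappa_\Phi\epsilon^2}\Big\rfloor,$$ where $\bar\kappa_\Phi:=\eta\min\{\sigma_u\bar\tau_{\min}\bar\alpha_{\min},\ \tfrac{\sigma_c}{2\kappa_c(1+\kappa_{\nabla c}^2)},\ \tfrac{\sigma_c\kappa_v\bar\alpha_{\min}}{2\kappa_c}\}$. (ii) $\lim_{k\to\infty}\tau_k=0$. In this case there exists a subsequence $\mathcal K\subseteq\mathbb{N}$ such that $\lim_{k\in\mathcal K}\|J_k^Tc_k\|_2=0$.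
   Context: Problem: $\min_{x\in\mathbb{R}^n} f(x)+r(x)$ subject to $c(x)=0$, where $f:\mathbb{R}^n\to\mathbb{R}$ and $c:\mathbb{R}^n\to\mathbb{R}^m$ ($m\le n$) are continuously differentiable and $r:\mathbb{R}^n\to\mathbb{R}_{\ge 0}$ is convex. Write $g(x)=\nabla f(x)$, $J(x)=\nabla c(x)^T$, and $f_k=f(x_k)$, $g_k=g(x_k)$, $c_k=c(x_k)$, $J_k=J(x_k)$, $r_k=r(x_k)$. All norms are Euclidean (spectral norm for matrices). Merit function: $\Phi_\tau(x)=\tau(f(x)+r(x))+\|c(x)\|_2$. Algorithm: inputs $x_0$, $\alpha_0>0$, $\tau_{-1}>0$; constants $\kappa_v>0$, $\sigma_c,\epsilon_\tau,\xi,\eta\in(0,1)$, $\sigma_u\in(0,1/2]$, $\bar\sigma_u:=\sigma_u+\tfrac12$. For $k=0,1,\dots$: 1. If $J_k^Tc_k\ne0$, compute $v_k$ with $v_k\in\mathrm{Range}(J_k^T)$, $\|v_k\|_2\le\kappa_v\alpha_k\|J_k^Tc_k\|_2$, $\|c_k+J_kv_k\|_2\le\|c_k+J_kv_k^c\|_2$, where $v_k^c=-\beta_k^cJ_k^Tc_k$ with $\beta_k^c$ minimizing $\tfrac12\|c_k-\beta J_kJ_k^Tc_k\|_2^2$ over $0\le\beta\le\kappa_v\alpha_k$. Otherwise set $v_k=0$, and if $c_k\ne0$ terminate. 2. Let $u_k$ be the unique minimizer of $g_k^Tu+\tfrac1{2\alpha_k}\|u\|_2^2+r(x_k+v_k+u)$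 subject to $J_ku=0$; set $s_k=v_k+u_k$. If $s_k=0$, terminate. By the optimality conditions there exist $g_{r,k}\in\partial r(x_k+s_k)$ and $y_k\in\mathbb{R}^m$ with $g_k+\tfrac1{\alpha_k}u_k+g_{r,k}-J_k^Ty_k=0$; $g_{r,k},y_k$ denote such vectors. 3. Let $D_k:=g_k^Ts_k+\bar\sigma_u\|s_k\|_2^2/\alpha_k+r(x_k+s_k)-r_k$; $\tau_{k,\mathrm{trial}}=\infty$ if $D_k\le0$, else $\tau_{k,\mathrm{trial}}=(1-\sigma_c)(\|c_k\|_2-\|c_k+J_kv_k\|_2)/D_k$. Set $\tau_k=\tau_{k-1}$ if $\tau_{k-1}\le\tau_{k,\mathrm{trial}}$, else $\tau_k=\min\{(1-\epsilon_\tau)\tau_{k-1},\tau_{k,\mathrm{trial}}\}$. 4. With $\Delta q_k(s,\tau):=-\tau(g_k^Ts+\tfrac1{2\alpha_k}\|s\|_2^2+r(x_k+s)-r_k)+\|c_k\|_2-\|c_k+J_ks\|_2$: if $\Phi_{\tau_k}(x_k+s_k)\le\Phi_{\tau_k}(x_k)-\eta\Delta q_k(s_k,\tau_k)$ set $x_{k+1}=x_k+s_k$, $\alpha_{k+1}=\alpha_k$; else $x_{k+1}=x_k$, $\alpha_{k+1}=\xi\alpha_k$. Measure: $\bar\chi_k:=\max\{\|g_k+g_{r,k}-J_k^Ty_k\|_2,\ \|J_k^Tc_k\|_2\}$. Assumption: there is an open convex set $\mathcal X$ containing all iterates $x_k$ and trial points $x_k+s_k$, and positive constants such that for all $x\in\mathcal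 X$: $f(x)\ge f_{\inf}$, $\|\nabla f(x)\|_2\le\kappa_{\nabla f}$, $\|c(x)\|_2\le\kappa_c$, $\|J(x)\|_2\le\kappa_{\nabla c}$, every $w\in\partial r(x)$ has $\|w\|_2\le\kappa_{\partial r}$; $\nabla f$ is $L_g$-Lipschitz and $J$ is $L_J$-Lipschitz on $\mathcal X$. (No uniform lower bound on singular values of $J_k$ is assumed.) *)

theory Defs
  imports "HOL-Analysis.Analysis"
begin

definition subdiff :: "('a::real_inner \<Rightarrow> real) \<Rightarrow> 'a \<Rightarrow> 'a set" where
  "subdiff r x = {w. \<forall>z. r z \<ge> r x + w \<bullet> (z - x)}"

end

theory Submission
  imports Defs
begin

(*
  The merit parameters tau_k are nonincreasing and nonnegative, so either they stay above some
  t > 0 or they tend to 0. The shifted merit tau_k (f - f_inf + r) + ||c|| at the iterates is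
  nonnegative and nonincreasing, and an accepted step lowers it by eta times the model reduction,
  which by the choice of tau_k dominates sigma_u tau_k ||s_k||^2 / alpha_k plus sigma_c times the
  decrease of the linearized constraint violation; the Cauchy property of the normal step makes
  the latter of order ||J_k^T c_k||^2. By the descent lemmas for f and c, a step is accepted as
  soon as alpha_k is small compared with tau_k, and also as soon as alpha_k is small compared with
  ||J_k^T c_k||^2. Hence alpha_k stays bounded below and only boundedly many steps are rejected.
  If tau_k >= t, every accepted step with chi_k > epsilon lowers the merit by kappa_Phi epsilon^2,
  which yields the iteration bound. If ||J_k^T c_k|| stayed above some delta > 0 from some index
  on, the merit would drop by a fixed amount at infinitely many steps; so a subsequence of
  ||J_k^T c_k|| tends to 0 (whatever the behaviour of tau_k).
*)

lemma DERIV_upper_quadratic_bound: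
  fixes \<phi> \<phi>' :: "real \<Rightarrow> real"
  assumes deriv: "\<And>t. 0 \<le> t \<Longrightarrow> t \<le> 1 \<Longrightarrow> (\<phi> has_real_derivative \<phi>' t) (at t)"
    and growth: "\<And>t. 0 \<le> t \<Longrightarrow> t \<le> 1 \<Longrightarrow> \<phi>' t \<le> \<phi>' 0 + L * t"
  shows "\<phi> 1 \<le> \<phi> 0 + \<phi>' 0 + L / 2"
proof -
  define \<psi> where "\<psi> t = \<phi> t - t * \<phi>' 0 - L * t\<^sup>2 / 2" for t
  have "\<psi> 1 \<le> \<psi> 0"
  proof (rule DERIV_nonpos_imp_nonincreasing[of 0 1 \<psi>])
    fix t :: real assume t: "0 \<le> t" "t \<le> 1"
    have "(\<psi> has_real_derivative (\<phi>' t - \<phi>' 0 - L * t)) (at t)"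
      unfolding \<psi>_def[abs_def] by (rule derivative_eq_intros deriv[OF t] refl | simp)+
    then show "\<exists>y. (\<psi> has_real_derivative y) (at t) \<and> y \<le> 0"
      using growth[OF t] by auto
  qed simp
  then show ?thesis by (simp add: \<psi>_def)
qed

lemma linearization_error_le:
  fixes h :: "'a::real_inner \<Rightarrow> 'b::real_inner"
  assumes deriv: "\<And>z. z \<in> X \<Longrightarrow> (h has_derivative A z) (at z)"
    and "convex X" "x \<in> X" "y \<in> X" "0 \<le> L"
    and lip: "\<And>z w. z \<in> X \<Longrightarrow> w \<in> X \<Longrightarrow> onorm (\<lambda>v. A z v - A w v) \<le> L * norm (z - w)"
  shows "norm (h y - h x - A x (y - x)) \<le> L / 2 * (norm (y - x))\<^sup>2"
proof -
  define d where "d = y - x"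
  \<comment> \<open>Testing against the error vector \<open>e\<close> itself reduces the estimate to a scalar one.\<close>
  define e where "e = h y - h x - A x d"
  define \<phi> where "\<phi> t = e \<bullet> h (x + t *\<^sub>R d)" for t
  define \<phi>' where "\<phi>' t = e \<bullet> A (x + t *\<^sub>R d) d" for t
  have "\<phi> 1 \<le> \<phi> 0 + \<phi>' 0 + norm e * L * (norm d)\<^sup>2 / 2"
  proof (rule DERIV_upper_quadratic_bound)
    fix t :: real assume t: "0 \<le> t" "t \<le> 1"
    have mem: "x + t *\<^sub>R d \<in> X"
      using convexD_alt[OF assms(2-4) t] by (simp add: d_def algebra_simps)
    have lin: "bounded_linear (A (x + t *\<^sub>R d))" "bounded_linear (A x)"
      using deriv[OF mem] deriv[OF \<open>x \<in> X\<close>] by (simp_all add: has_derivative_bounded_linear)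
    have line: "((\<lambda>t. x + t *\<^sub>R d) has_derivative (\<lambda>s. s *\<^sub>R d)) (at t)"
      by (rule derivative_eq_intros refl | simp)+
    have "((\<lambda>t. h (x + t *\<^sub>R d)) has_derivative (\<lambda>s. A (x + t *\<^sub>R d) (s *\<^sub>R d))) (at t)"
      using has_derivative_compose[OF line deriv[OF mem]] by (simp add: o_def)
    from has_derivative_inner_right[OF this, of e]
    show "(\<phi> has_real_derivative \<phi>' t) (at t)"
      using linear.scaleR[OF bounded_linear.linear[OF lin(1)]]
      by (simp add: has_field_derivative_def \<phi>_def[abs_def] \<phi>'_def mult_commute_abs)
    have "\<phi>' t - \<phi>' 0 = e \<bullet> (A (x + t *\<^sub>R d) d - A x d)"
      by (simp add: \<phi>'_def inner_diff_right)
    also have "\<dots> \<le> norm e * norm (A (x + t *\<^sub>R d) d - A x d)"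
      by (rule norm_cauchy_schwarz)
    also have "\<dots> \<le> norm e * (L * norm (t *\<^sub>R d) * norm d)"
    proof (rule mult_left_mono)
      have "norm (A (x + t *\<^sub>R d) d - A x d) \<le> onorm (\<lambda>v. A (x + t *\<^sub>R d) v - A x v) * norm d"
        using onorm[OF bounded_linear_sub[OF lin]] .
      also have "\<dots> \<le> L * norm ((x + t *\<^sub>R d) - x) * norm d"
        using lip[OF mem \<open>x \<in> X\<close>] by (rule mult_right_mono) simp
      finally show "norm (A (x + t *\<^sub>R d) d - A x d) \<le> L * norm (t *\<^sub>R d) * norm d" by simp
    qed simp
    also have "\<dots> = norm e * L * (norm d)\<^sup>2 * t"
      using t by (simp add: power2_eq_square)
    finally show "\<phi>' t \<le> \<phi>' 0 + norm e * L * (norm d)\<^sup>2 * t" by simp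
  qed
  moreover have "e \<bullet> e = \<phi> 1 - \<phi> 0 - \<phi>' 0"
    by (simp add: \<phi>_def \<phi>'_def d_def e_def inner_diff_right)
  ultimately have "norm e * norm e \<le> norm e * (L / 2 * (norm d)\<^sup>2)"
    by (simp add: power2_norm_eq_inner[symmetric] power2_eq_square)
  then show ?thesis
    using \<open>0 \<le> L\<close> by (cases "e = 0") (auto simp: e_def d_def)
qed

lemma lipschitz_gradient_upper_bound:
  fixes f :: "'a::real_inner \<Rightarrow> real"
  assumes deriv: "\<And>z. z \<in> X \<Longrightarrow> GDERIV f z :> g z"
    and "convex X" "x \<in> X" "y \<in> X" "0 \<le> L"
    and lip: "\<And>z w. z \<in> X \<Longrightarrow> w \<in> X \<Longrightarrow> norm (g z - g w) \<le> L * norm (z - w)"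
  shows "f y \<le> f x + g x \<bullet> (y - x) + L / 2 * (norm (y - x))\<^sup>2"
proof -
  have "norm (f y - f x - (y - x) \<bullet> g x) \<le> L / 2 * (norm (y - x))\<^sup>2"
  proof (rule linearization_error_le[of X f "\<lambda>z v. v \<bullet> g z"])
    show "(f has_derivative (\<lambda>v. v \<bullet> g z)) (at z)" if "z \<in> X" for z
      using deriv[OF that] by (simp add: gderiv_def)
    show "onorm (\<lambda>v. v \<bullet> g z - v \<bullet> g w) \<le> L * norm (z - w)" if "z \<in> X" "w \<in> X" for z w
    proof -
      have "onorm (\<lambda>v. v \<bullet> g z - v \<bullet> g w) \<le> norm (g z - g w)"
      proof (rule onorm_bound)
        fix v
        show "norm (v \<bullet> g z - v \<bullet> g w) \<le> norm (g z - g w) * norm v"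
          using Cauchy_Schwarz_ineq2[of v "g z - g w"] by (simp add: inner_diff_right mult.commute)
      qed simp
      with lip[OF that] show ?thesis by linarith
    qed
  qed fact+
  then have "f y - f x - (y - x) \<bullet> g x \<le> L / 2 * (norm (y - x))\<^sup>2"
    by (smt (verit) real_norm_def abs_ge_self)
  then show ?thesis by (simp add: inner_commute)
qed

lemma lipschitz_jacobian_linearization_error:
  fixes c :: "real^'n \<Rightarrow> real^'m" and J :: "real^'n \<Rightarrow> real^'n^'m"
  assumes "\<And>z. z \<in> X \<Longrightarrow> (c has_derivative (\<lambda>h. J z *v h)) (at z)"
    and "convex X" "x \<in> X" "y \<in> X" "0 \<le> L"
    and lip: "\<And>z w. z \<in> X \<Longrightarrow> w \<in> X \<Longrightarrow> onorm (\<lambda>h. (J z - J w) *v h) \<le> L * norm (z - w)"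
  shows "norm (c y - c x - J x *v (y - x)) \<le> L / 2 * (norm (y - x))\<^sup>2"
  using linearization_error_le[of X c "\<lambda>z h. J z *v h"] assms
  by (simp add: matrix_vector_mult_diff_rdistrib)

lemma norm_transpose_mult_le:
  fixes A :: "real^'n^'m"
  shows "norm (transpose A *v z) \<le> onorm ((*v) A) * norm z"
proof -
  define w where "w = transpose A *v z"
  have "(norm w)\<^sup>2 = z \<bullet> (A *v w)"
    by (simp add: w_def dot_lmul_matrix power2_norm_eq_inner)
  also have "\<dots> \<le> norm z * (onorm ((*v) A) * norm w)"
    using norm_cauchy_schwarz[of z "A *v w"] onorm[OF matrix_vector_mul_bounded_linear, of A w]
    by (meson mult_left_mono norm_ge_zero order_trans)
  finally have "norm w * norm w \<le> (onorm ((*v) A) * norm z) * norm w"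
    by (simp add: power2_eq_square algebra_simps)
  then show ?thesis
    using onorm_pos_le[OF matrix_vector_mul_bounded_linear, of A]
    by (cases "w = 0") (auto simp: w_def)
qed

lemma norm_gradient_step_sq_le:
  fixes A :: "real^'n^'m"
  assumes "0 \<le> b" "onorm ((*v) A) \<le> K" "b * K\<^sup>2 \<le> 1"
  shows "(norm (z - b *\<^sub>R (A *v (transpose A *v z))))\<^sup>2 \<le> (norm z)\<^sup>2 - b * (norm (transpose A *v z))\<^sup>2"
proof -
  define w where "w = transpose A *v z"
  have zAw: "z \<bullet> (A *v w) = (norm w)\<^sup>2"
    by (simp add: w_def dot_lmul_matrix power2_norm_eq_inner)
  have "norm (A *v w) \<le> K * norm w"
    using onorm[OF matrix_vector_mul_bounded_linear, of A w] assms(2)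
    by (meson mult_right_mono norm_ge_zero order_trans)
  from power_mono[OF this norm_ge_zero, of 2]
  have Aw: "(norm (A *v w))\<^sup>2 \<le> K\<^sup>2 * (norm w)\<^sup>2"
    by (simp add: power_mult_distrib)
  have "(norm (z - b *\<^sub>R (A *v w)))\<^sup>2 = (norm z)\<^sup>2 - 2 * b * (z \<bullet> (A *v w)) + b\<^sup>2 * (norm (A *v w))\<^sup>2"
    using dot_norm_neg[of z "b *\<^sub>R (A *v w)"] by (simp add: power_mult_distrib)
  also have "\<dots> \<le> (norm z)\<^sup>2 - 2 * b * (norm w)\<^sup>2 + b\<^sup>2 * (K\<^sup>2 * (norm w)\<^sup>2)"
    using mult_left_mono[OF Aw, of "b\<^sup>2"] by (simp add: zAw)
  also have "b\<^sup>2 * (K\<^sup>2 * (norm w)\<^sup>2) = (b * (norm w)\<^sup>2) * (b * K\<^sup>2)"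
    by (simp add: power2_eq_square)
  also have "\<dots> \<le> b * (norm w)\<^sup>2"
    using mult_left_mono[OF assms(3), of "b * (norm w)\<^sup>2"] assms(1) by simp
  finally show ?thesis by (simp add: w_def)
qed

lemma accepted_rejected_count:
  fixes a P :: "nat \<Rightarrow> real" and acc :: "nat \<Rightarrow> bool"
  assumes acc: "\<And>k. k < K \<Longrightarrow> acc k \<Longrightarrow> a (Suc k) = a k \<and> P (Suc k) \<le> P k - d"
    and rej: "\<And>k. k < K \<Longrightarrow> \<not> acc k \<Longrightarrow> a (Suc k) = \<xi> * a k \<and> P (Suc k) \<le> P k \<and> b < a k"
    and B: "a 0 * \<xi> ^ B \<le> b" and \<xi>: "0 < \<xi>" "\<xi> < 1" and "0 < a 0" "0 \<le> d"
  shows "d * (real K - real B) \<le> P 0 - P K"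
proof -
  \<comment> \<open>\<open>U\<close> counts the rejections among the first \<open>j\<close> steps; a further one needs \<open>b < a 0 * \<xi> ^ U\<close>.\<close>
  have "\<exists>U\<le>B. a j = a 0 * \<xi> ^ U \<and> P j + d * (real j - real U) \<le> P 0" if "j \<le> K" for j
    using that
  proof (induction j)
    case 0 then show ?case by auto
  next
    case (Suc j)
    then obtain U where U: "U \<le> B" "a j = a 0 * \<xi> ^ U" "P j + d * (real j - real U) \<le> P 0"
      by auto
    show ?case
    proof (cases "acc j")
      case True
      with acc Suc.prems have "a (Suc j) = a j" "P (Suc j) \<le> P j - d" by auto
      with U show ?thesis by (intro exI[of _ U]) (auto simp: algebra_simps)
    next
      case False
      with rej Suc.prems have step: "a (Suc j) = \<xi> * a j" "P (Suc j) \<le> P j" "b < a j" by auto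
      have "U < B"
      proof (rule ccontr)
        assume "\<not> U < B"
        then have "\<xi> ^ U \<le> \<xi> ^ B" using \<xi> by (intro power_decreasing) auto
        then have "a 0 * \<xi> ^ U \<le> a 0 * \<xi> ^ B" using \<open>0 < a 0\<close> by simp
        with B step(3) U(2) show False by linarith
      qed
      with U step \<open>0 \<le> d\<close> show ?thesis by (auto simp: algebra_simps intro!: exI[of _ "Suc U"])
    qed
  qed
  then obtain U where "U \<le> B" "P K + d * (real K - real U) \<le> P 0" by blast
  moreover from \<open>U \<le> B\<close> have "d * (real K - real B) \<le> d * (real K - real U)"
    using \<open>0 \<le> d\<close> by (intro mult_left_mono) auto
  ultimately show ?thesis by linarith
qed

lemma power_nat_ceiling_log_le:
  fixes \<xi> q :: real
  assumes "0 < \<xi>" "\<xi> < 1" "0 < q"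
  shows "\<xi> ^ nat \<lceil>ln q / ln \<xi>\<rceil> \<le> q"
proof -
  have "log \<xi> q \<le> real (nat \<lceil>ln q / ln \<xi>\<rceil>)"
    by (simp add: log_def) linarith
  then have "\<xi> powr real (nat \<lceil>ln q / ln \<xi>\<rceil>) \<le> \<xi> powr log \<xi> q"
    using assms by (intro powr_mono') auto
  with assms show ?thesis by (simp add: powr_realpow)
qed

locale proximal_sqp =
  fixes f :: "real^'n \<Rightarrow> real" and g :: "real^'n \<Rightarrow> real^'n"
    and c :: "real^'n \<Rightarrow> real^'m" and J :: "real^'n \<Rightarrow> real^'n^'m"
    and r :: "real^'n \<Rightarrow> real"
    and x v u s gr :: "nat \<Rightarrow> real^'n" and y :: "nat \<Rightarrow> real^'m"
    and alpha tau betac :: "nat \<Rightarrow> real"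
    and tau_m1 kappa_v sigma_c eps_tau xi eta sigma_u :: real
    and X :: "(real^'n) set"
    and f_inf kappa_gf kappa_c kappa_gc kappa_dr L_g L_J :: real
  assumes f_deriv: "\<forall>z. GDERIV f z :> g z"
    and c_deriv: "\<forall>z. (c has_derivative (\<lambda>h. J z *v h)) (at z)"
    and r_nonneg: "\<forall>z. r z \<ge> 0" and r_convex: "convex_on UNIV r"
    and alpha0: "alpha 0 > 0" and taum1: "tau_m1 > 0"
    and kv: "kappa_v > 0"
    and sc: "0 < sigma_c" "sigma_c < 1"
    and et: "0 < eps_tau" "eps_tau < 1"
    and xi: "0 < xi" "xi < 1"
    and eta: "0 < eta" "eta < 1"
    and su: "0 < sigma_u" "sigma_u \<le> 1/2"
    and step1a: "\<forall>k. transpose (J (x k)) *v c (x k) \<noteq> 0 \<longrightarrow>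
        v k \<in> range (\<lambda>w. transpose (J (x k)) *v w)
      \<and> norm (v k) \<le> kappa_v * alpha k * norm (transpose (J (x k)) *v c (x k))
      \<and> 0 \<le> betac k \<and> betac k \<le> kappa_v * alpha k
      \<and> (\<forall>\<beta>. 0 \<le> \<beta> \<and> \<beta> \<le> kappa_v * alpha k \<longrightarrow>
            (1/2) * (norm (c (x k) - betac k *\<^sub>R (J (x k) *v (transpose (J (x k)) *v c (x k)))))\<^sup>2
          \<le> (1/2) * (norm (c (x k) - \<beta> *\<^sub>R (J (x k) *v (transpose (J (x k)) *v c (x k)))))\<^sup>2)
      \<and> norm (c (x k) + J (x k) *v v k)
          \<le> norm (c (x k) + J (x k) *v (- (betac k *\<^sub>R (transpose (J (x k)) *v c (x k)))))"
    and step1b: "\<forall>k. transpose (J (x k)) *v c (x k) = 0 \<longrightarrow> v k = 0 \<and> c (x k) = 0"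
    and J_u: "\<forall>k. J (x k) *v u k = 0"
    and s_def: "\<forall>k. s k = v k + u k"
    and opt: "\<forall>k. gr k \<in> subdiff r (x k + s k) \<and>
       g (x k) + (1 / alpha k) *\<^sub>R u k + gr k - transpose (J (x k)) *v y k = 0"
    and step3: "\<forall>k. let tp = (if k = 0 then tau_m1 else tau (k - 1));
          D = g (x k) \<bullet> s k + (sigma_u + 1/2) * (norm (s k))\<^sup>2 / alpha k + r (x k + s k) - r (x k)
        in (if D \<le> 0 then tau k = tp
            else (let tt = (1 - sigma_c) * (norm (c (x k)) - norm (c (x k) + J (x k) *v v k)) / D
                  in tau k = (if tp \<le> tt then tp else min ((1 - eps_tau) * tp) tt)))"
    and step4: "\<forall>k. let dq = - tau k * (g (x k) \<bullet> s k + (norm (s k))\<^sup>2 / (2 * alpha k)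
                              + r (x k + s k) - r (x k))
                   + norm (c (x k)) - norm (c (x k) + J (x k) *v s k);
          Phi = (\<lambda>z. tau k * (f z + r z) + norm (c z))
        in (if Phi (x k + s k) \<le> Phi (x k) - eta * dq
            then x (Suc k) = x k + s k \<and> alpha (Suc k) = alpha k
            else x (Suc k) = x k \<and> alpha (Suc k) = xi * alpha k)"
    and X_convex: "convex X"
    and X_iter: "\<forall>k. x k \<in> X \<and> x k + s k \<in> X"
    and consts_pos: "kappa_gf > 0" "kappa_c > 0" "kappa_gc > 0" "kappa_dr > 0" "L_g > 0" "L_J > 0"
    and f_lb: "\<forall>z\<in>X. f z \<ge> f_inf"
    and g_bd: "\<forall>z\<in>X. norm (g z) \<le> kappa_gf"
    and c_bd: "\<forall>z\<in>X. norm (c z) \<le> kappa_c"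
    and J_bd: "\<forall>z\<in>X. onorm (\<lambda>h. J z *v h) \<le> kappa_gc"
    and dr_bd: "\<forall>z\<in>X. \<forall>w\<in>subdiff r z. norm w \<le> kappa_dr"
    and g_lip: "\<forall>z\<in>X. \<forall>w\<in>X. norm (g z - g w) \<le> L_g * norm (z - w)"
    and J_lip: "\<forall>z\<in>X. \<forall>w\<in>X. onorm (\<lambda>h. (J z - J w) *v h) \<le> L_J * norm (z - w)"
begin

definition "JTc k = transpose (J (x k)) *v c (x k)"
definition "tau_prev k = (if k = 0 then tau_m1 else tau (k - 1))"
definition "D k = g (x k) \<bullet> s k + (sigma_u + 1/2) * (norm (s k))\<^sup>2 / alpha k + r (x k + s k) - r (x k)"
definition "feas_decrease k = norm (c (x k)) - norm (c (x k) + J (x k) *v v k)"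
definition "tau_trial k = (1 - sigma_c) * feas_decrease k / D k"
definition "model_decrease k = - tau k * (g (x k) \<bullet> s k + (norm (s k))\<^sup>2 / (2 * alpha k)
    + r (x k + s k) - r (x k)) + norm (c (x k)) - norm (c (x k) + J (x k) *v s k)"
definition "merit k z = tau k * (f z + r z) + norm (c z)"
definition "accepted k \<longleftrightarrow> merit k (x k + s k) \<le> merit k (x k) - eta * model_decrease k"
definition "shifted_merit k = tau k * (f (x k) - f_inf + r (x k)) + norm (c (x k))"
definition "chi k = max (norm (g (x k) + gr k - transpose (J (x k)) *v y k)) (norm (JTc k))"

lemma tau_eq: "tau k = (if D k \<le> 0 then tau_prev k else if tau_prev k \<le> tau_trial k then tau_prev k
    else min ((1 - eps_tau) * tau_prev k) (tau_trial k))"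
  using step3 unfolding Let_def tau_prev_def D_def tau_trial_def feas_decrease_def
  by (auto split: if_splits)

lemma accepted_step: "accepted k \<Longrightarrow> x (Suc k) = x k + s k \<and> alpha (Suc k) = alpha k"
  using step4 unfolding Let_def accepted_def merit_def model_decrease_def by (auto split: if_splits)

lemma rejected_step: "\<not> accepted k \<Longrightarrow> x (Suc k) = x k \<and> alpha (Suc k) = xi * alpha k"
  using step4 unfolding Let_def accepted_def merit_def model_decrease_def by (auto split: if_splits)

lemma alpha_pos: "0 < alpha k"
proof (induction k)
  case (Suc k) then show ?case
    using accepted_step[of k] rejected_step[of k] xi by (cases "accepted k") auto
qed (use alpha0 in simp)

lemma JTc_eq_0: "JTc k = 0 \<Longrightarrow> v k = 0 \<and> c (x k) = 0"
  using step1b unfolding JTc_def by blast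

lemma v_in_range: "\<exists>w. v k = transpose (J (x k)) *v w"
  using step1a JTc_eq_0[of k] unfolding JTc_def by (metis matrix_vector_mult_0_right rangeE)

lemma norm_v_le: "norm (v k) \<le> kappa_v * alpha k * norm (JTc k)"
  using step1a JTc_eq_0[of k] unfolding JTc_def by (cases "JTc k = 0") (auto simp: JTc_def)

lemma normal_step_le_cauchy_step:
  assumes "0 \<le> b" "b \<le> kappa_v * alpha k"
  shows "norm (c (x k) + J (x k) *v v k) \<le> norm (c (x k) - b *\<^sub>R (J (x k) *v JTc k))"
proof (cases "JTc k = 0")
  case True then show ?thesis using JTc_eq_0 by simp
next
  case False
  from False step1a[rule_format, of k, folded JTc_def] assms
  have "norm (c (x k) + J (x k) *v v k) \<le> norm (c (x k) + J (x k) *v (- (betac k *\<^sub>R JTc k)))"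
    and "(1/2) * (norm (c (x k) - betac k *\<^sub>R (J (x k) *v JTc k)))\<^sup>2
      \<le> (1/2) * (norm (c (x k) - b *\<^sub>R (J (x k) *v JTc k)))\<^sup>2"
    by blast+
  moreover have "J (x k) *v (- (betac k *\<^sub>R JTc k)) = - (betac k *\<^sub>R (J (x k) *v JTc k))"
    by (simp add: linear_neg[OF matrix_vector_mul_linear] matrix_vector_mult_scaleR)
  ultimately have cauchy: "norm (c (x k) + J (x k) *v v k) \<le> norm (c (x k) - betac k *\<^sub>R (J (x k) *v JTc k))"
    and "(norm (c (x k) - betac k *\<^sub>R (J (x k) *v JTc k)))\<^sup>2 \<le> (norm (c (x k) - b *\<^sub>R (J (x k) *v JTc k)))\<^sup>2"
    by simp_all
  then have "norm (c (x k) - betac k *\<^sub>R (J (x k) *v JTc k)) \<le> norm (c (x k) - b *\<^sub>R (J (x k) *v JTc k))"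
    by (simp add: power_mono_iff)
  with cauchy show ?thesis by linarith
qed

lemma normal_step_le_norm_c: "norm (c (x k) + J (x k) *v v k) \<le> norm (c (x k))"
  using normal_step_le_cauchy_step[of 0 k] alpha_pos[of k] kv by simp

lemma feas_decrease_nonneg: "0 \<le> feas_decrease k"
  using normal_step_le_norm_c by (simp add: feas_decrease_def)

lemma tau_bounds_if_prev_nonneg: "0 \<le> tau_prev k \<Longrightarrow> 0 \<le> tau k \<and> tau k \<le> tau_prev k"
  using tau_eq[of k] feas_decrease_nonneg[of k] sc et
  by (auto simp: tau_trial_def min_def)

lemma tau_bounds: "0 \<le> tau k \<and> tau k \<le> tau_prev k"
proof (induction k)
  case 0 then show ?case using tau_bounds_if_prev_nonneg[of 0] taum1 by (simp add: tau_prev_def)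
next
  case (Suc k) then show ?case using tau_bounds_if_prev_nonneg[of "Suc k"] by (simp add: tau_prev_def)
qed

lemma tau_nonneg: "0 \<le> tau k"
  using tau_bounds by blast

lemma tau_Suc_le: "tau (Suc k) \<le> tau k"
  using tau_bounds[of "Suc k"] by (simp add: tau_prev_def)

lemma decseq_tau: "decseq tau"
  using tau_Suc_le by (simp add: decseq_SucI)

lemma tau_le_tau_m1: "tau k \<le> tau_m1"
  using decseq_tau[unfolded decseq_def, rule_format, of 0 k] tau_bounds[of 0]
  by (simp add: tau_prev_def)

lemma tau_D_le: "tau k * D k \<le> (1 - sigma_c) * feas_decrease k"
proof (cases "D k \<le> 0")
  case True
  then have "tau k * D k \<le> 0" using tau_nonneg[of k] by (simp add: mult_nonneg_nonpos)
  also have "0 \<le> (1 - sigma_c) * feas_decrease k" using feas_decrease_nonneg[of k] sc by simp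
  finally show ?thesis .
next
  case False
  then have "tau k \<le> tau_trial k" using tau_eq[of k] by (auto simp: min_def)
  then have "tau k * D k \<le> tau_trial k * D k" using False by (simp add: mult_right_mono)
  also have "\<dots> = (1 - sigma_c) * feas_decrease k" using False by (simp add: tau_trial_def)
  finally show ?thesis .
qed

lemma J_s: "J (x k) *v s k = J (x k) *v v k"
  using J_u s_def by (simp add: matrix_vector_right_distrib)

lemma norm_s_sq: "(norm (s k))\<^sup>2 = (norm (u k))\<^sup>2 + (norm (v k))\<^sup>2"
proof -
  obtain w where w: "v k = transpose (J (x k)) *v w" using v_in_range by blast
  have "v k \<bullet> u k = 0"
    using J_u by (simp add: w dot_lmul_matrix)
  then show ?thesis
    using s_def by (simp add: power2_norm_eq_inner inner_add_left inner_add_right inner_commute)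
qed

lemma norm_u_le_norm_s: "norm (u k) \<le> norm (s k)"
  using norm_s_sq[of k] by (metis le_add_same_cancel1 norm_ge_zero power2_le_imp_le zero_le_power2)

lemma norm_stationarity_residual: "norm (g (x k) + gr k - transpose (J (x k)) *v y k) = norm (u k) / alpha k"
proof -
  have "g (x k) + gr k - transpose (J (x k)) *v y k = - ((1 / alpha k) *\<^sub>R u k)"
    using opt by (simp add: algebra_simps eq_neg_iff_add_eq_0)
  then show ?thesis using alpha_pos[of k] by simp
qed

lemma norm_u_le: "norm (u k) \<le> alpha k * (kappa_gf + kappa_dr)"
proof -
  have eq: "(1 / alpha k) *\<^sub>R u k = transpose (J (x k)) *v y k - (g (x k) + gr k)"
    using opt by (simp add: algebra_simps eq_neg_iff_add_eq_0)
  have "(transpose (J (x k)) *v y k) \<bullet> u k = 0"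
    using J_u by (simp add: dot_lmul_matrix)
  then have "(norm (u k))\<^sup>2 / alpha k = - ((g (x k) + gr k) \<bullet> u k)"
    using arg_cong[OF eq, of "\<lambda>z. z \<bullet> u k"] by (simp add: inner_diff_left power2_norm_eq_inner)
  also have "\<dots> \<le> norm (g (x k) + gr k) * norm (u k)"
    using Cauchy_Schwarz_ineq2[of "g (x k) + gr k" "u k"] by linarith
  also have "\<dots> \<le> (kappa_gf + kappa_dr) * norm (u k)"
  proof (rule mult_right_mono)
    have "norm (g (x k)) \<le> kappa_gf" "norm (gr k) \<le> kappa_dr"
      using g_bd dr_bd X_iter opt by blast+
    then show "norm (g (x k) + gr k) \<le> kappa_gf + kappa_dr"
      by (meson add_mono norm_triangle_ineq order_trans)
  qed simp
  finally have "norm (u k) * norm (u k) \<le> (alpha k * (kappa_gf + kappa_dr)) * norm (u k)"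
    using alpha_pos[of k] by (simp add: power2_eq_square field_simps)
  then show ?thesis
    using alpha_pos[of k] consts_pos by (cases "u k = 0") auto
qed

lemma norm_JTc_le: "norm (JTc k) \<le> kappa_gc * norm (c (x k))"
  using norm_transpose_mult_le[of "J (x k)" "c (x k)"] J_bd X_iter
  unfolding JTc_def by (meson mult_right_mono norm_ge_zero order_trans)

lemma norm_s_sq_le:
  "(norm (s k))\<^sup>2 \<le> (alpha k)\<^sup>2 * ((kappa_gf + kappa_dr)\<^sup>2 + (kappa_v * kappa_gc * kappa_c)\<^sup>2)"
proof -
  have "norm (JTc k) \<le> kappa_gc * kappa_c"
    using norm_JTc_le[of k] c_bd X_iter consts_pos by (meson mult_left_mono order_trans less_imp_le)
  then have "norm (v k) \<le> alpha k * (kappa_v * kappa_gc * kappa_c)"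
    using norm_v_le[of k] kv alpha_pos[of k]
    by (smt (verit) mult.assoc mult.commute mult_left_mono mult_pos_pos)
  from power_mono[OF this norm_ge_zero, of 2]
  have "(norm (v k))\<^sup>2 \<le> (alpha k)\<^sup>2 * (kappa_v * kappa_gc * kappa_c)\<^sup>2"
    by (simp add: power_mult_distrib)
  moreover from power_mono[OF norm_u_le[of k] norm_ge_zero, of 2]
  have "(norm (u k))\<^sup>2 \<le> (alpha k)\<^sup>2 * (kappa_gf + kappa_dr)\<^sup>2"
    by (simp add: power_mult_distrib)
  ultimately show ?thesis
    by (simp add: norm_s_sq distrib_left)
qed

lemma feas_decrease_ge:
  assumes "0 \<le> a" "a \<le> alpha k"
  shows "(norm (JTc k))\<^sup>2 * min (1 / (1 + kappa_gc\<^sup>2)) (kappa_v * a) / (2 * kappa_c) \<le> feas_decrease k"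
proof -
  define b where "b = min (1 / (1 + kappa_gc\<^sup>2)) (kappa_v * a)"
  define lc where "lc = norm (c (x k) + J (x k) *v v k)"
  have b: "0 \<le> b" "b \<le> kappa_v * alpha k"
    using assms kv by (auto simp: b_def min_le_iff_disj intro: mult_left_mono)
  have "b \<le> 1 / (1 + kappa_gc\<^sup>2)" "0 < 1 + kappa_gc\<^sup>2"
    by (simp_all add: b_def add_pos_nonneg)
  then have "b + b * kappa_gc\<^sup>2 \<le> 1"
    by (simp add: pos_le_divide_eq distrib_left)
  with b(1) have b_kappa: "b * kappa_gc\<^sup>2 \<le> 1" by linarith
  have "lc\<^sup>2 \<le> (norm (c (x k) - b *\<^sub>R (J (x k) *v JTc k)))\<^sup>2"
    unfolding lc_def using normal_step_le_cauchy_step[OF b] by (intro power_mono) auto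
  also have "\<dots> \<le> (norm (c (x k)))\<^sup>2 - b * (norm (JTc k))\<^sup>2"
    unfolding JTc_def by (rule norm_gradient_step_sq_le[OF b(1) _ b_kappa]) (use J_bd X_iter in auto)
  finally have "b * (norm (JTc k))\<^sup>2 \<le> (norm (c (x k)) - lc) * (norm (c (x k)) + lc)"
    by (simp add: power2_eq_square algebra_simps)
  also have "\<dots> \<le> (norm (c (x k)) - lc) * (2 * kappa_c)"
  proof (rule mult_left_mono)
    have "norm (c (x k)) \<le> kappa_c" using c_bd X_iter by blast
    with normal_step_le_norm_c[of k] show "norm (c (x k)) + lc \<le> 2 * kappa_c"
      by (simp add: lc_def)
  qed (use normal_step_le_norm_c[of k] in \<open>simp add: lc_def\<close>)
  finally show ?thesis
    using consts_pos by (simp add: b_def feas_decrease_def lc_def field_simps mult.commute)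
qed

lemma model_decrease_ge:
  "tau k * sigma_u * (norm (s k))\<^sup>2 / alpha k + sigma_c * feas_decrease k \<le> model_decrease k"
proof -
  have "model_decrease k = - tau k * D k + tau k * sigma_u * (norm (s k))\<^sup>2 / alpha k + feas_decrease k"
    unfolding model_decrease_def D_def feas_decrease_def J_s using alpha_pos[of k]
    by (simp add: field_simps)
  with tau_D_le[of k] show ?thesis by (simp add: algebra_simps)
qed

lemma model_decrease_ge_feas_decrease: "sigma_c * feas_decrease k \<le> model_decrease k"
  using model_decrease_ge[of k] tau_nonneg[of k] su alpha_pos[of k]
  by (smt (verit) divide_nonneg_pos mult_nonneg_nonneg zero_le_power2)

lemma model_decrease_nonneg: "0 \<le> model_decrease k"
  using model_decrease_ge_feas_decrease[of k] feas_decrease_nonneg[of k] sc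
  by (smt (verit) mult_nonneg_nonneg)

lemma model_decrease_ge_JTc:
  assumes "0 \<le> a" "a \<le> alpha k"
  shows "sigma_c * ((norm (JTc k))\<^sup>2 * min (1 / (1 + kappa_gc\<^sup>2)) (kappa_v * a) / (2 * kappa_c))
    \<le> model_decrease k"
proof -
  have "sigma_c * ((norm (JTc k))\<^sup>2 * min (1 / (1 + kappa_gc\<^sup>2)) (kappa_v * a) / (2 * kappa_c))
      \<le> sigma_c * feas_decrease k"
    using feas_decrease_ge[OF assms] sc by (intro mult_left_mono) auto
  with model_decrease_ge_feas_decrease[of k] show ?thesis by linarith
qed

lemma model_error_le:
  "(tau k * L_g + L_J - tau k / alpha k) * (norm (s k))\<^sup>2
    \<le> (tau_m1 * L_g + L_J) * ((alpha k)\<^sup>2 * ((kappa_gf + kappa_dr)\<^sup>2 + (kappa_v * kappa_gc * kappa_c)\<^sup>2))"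
proof -
  have "tau k * L_g \<le> tau_m1 * L_g" "0 \<le> tau k / alpha k"
    using tau_le_tau_m1[of k] tau_nonneg[of k] alpha_pos[of k] consts_pos by simp_all
  then have "tau k * L_g + L_J - tau k / alpha k \<le> tau_m1 * L_g + L_J" by linarith
  then have "(tau k * L_g + L_J - tau k / alpha k) * (norm (s k))\<^sup>2 \<le> (tau_m1 * L_g + L_J) * (norm (s k))\<^sup>2"
    by (rule mult_right_mono) simp
  also have "\<dots> \<le> (tau_m1 * L_g + L_J) * ((alpha k)\<^sup>2 * ((kappa_gf + kappa_dr)\<^sup>2 + (kappa_v * kappa_gc * kappa_c)\<^sup>2))"
    using norm_s_sq_le[of k] taum1 consts_pos by (intro mult_left_mono) auto
  finally show ?thesis .
qed

lemma merit_increase_le: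
  "merit k (x k + s k) - merit k (x k)
     \<le> - model_decrease k + (tau k * L_g + L_J - tau k / alpha k) * (norm (s k))\<^sup>2 / 2"
proof -
  have xX: "x k \<in> X" and sX: "x k + s k \<in> X" using X_iter by auto
  have "f (x k + s k) \<le> f (x k) + g (x k) \<bullet> s k + L_g / 2 * (norm (s k))\<^sup>2"
    using lipschitz_gradient_upper_bound[OF _ X_convex xX sX, of f g L_g] f_deriv g_lip consts_pos
    by simp
  from mult_left_mono[OF this tau_nonneg[of k]]
  have f_bound: "tau k * f (x k + s k) \<le> tau k * f (x k) + tau k * (g (x k) \<bullet> s k)
      + tau k * L_g / 2 * (norm (s k))\<^sup>2"
    by (simp add: algebra_simps)
  have "norm (c (x k + s k) - c (x k) - J (x k) *v s k) \<le> L_J / 2 * (norm (s k))\<^sup>2"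
    using lipschitz_jacobian_linearization_error[OF _ X_convex xX sX, of c J L_J]
      c_deriv J_lip consts_pos by simp
  then have c_bound: "norm (c (x k + s k)) \<le> norm (c (x k) + J (x k) *v s k) + L_J / 2 * (norm (s k))\<^sup>2"
    using norm_triangle_ineq2[of "c (x k + s k)" "c (x k) + J (x k) *v s k"]
    by (simp add: algebra_simps)
  have "- model_decrease k + (tau k * L_g + L_J - tau k / alpha k) * (norm (s k))\<^sup>2 / 2
      = tau k * (g (x k) \<bullet> s k) + tau k * r (x k + s k) - tau k * r (x k)
        + tau k * L_g / 2 * (norm (s k))\<^sup>2 + L_J / 2 * (norm (s k))\<^sup>2
        - norm (c (x k)) + norm (c (x k) + J (x k) *v s k)"
    unfolding model_decrease_def using alpha_pos[of k] by (simp add: field_simps)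
  with f_bound c_bound show ?thesis
    unfolding merit_def distrib_left by linarith
qed

lemma accepted_if_model_error_le:
  "(tau k * L_g + L_J - tau k / alpha k) * (norm (s k))\<^sup>2 / 2 \<le> (1 - eta) * model_decrease k
    \<Longrightarrow> accepted k"
  using merit_increase_le[of k] left_diff_distrib[of 1 eta "model_decrease k"]
  unfolding accepted_def by linarith

lemma accepted_if_alpha_le: "alpha k * (tau k * L_g + L_J) \<le> tau k \<Longrightarrow> accepted k"
proof (rule accepted_if_model_error_le)
  assume "alpha k * (tau k * L_g + L_J) \<le> tau k"
  then have "tau k * L_g + L_J - tau k / alpha k \<le> 0"
    using alpha_pos[of k] by (simp add: field_simps)
  then have "(tau k * L_g + L_J - tau k / alpha k) * (norm (s k))\<^sup>2 / 2 \<le> 0"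
    by (simp add: mult_nonpos_nonneg)
  also have "0 \<le> (1 - eta) * model_decrease k"
    using eta model_decrease_nonneg[of k] by simp
  finally show "(tau k * L_g + L_J - tau k / alpha k) * (norm (s k))\<^sup>2 / 2 \<le> (1 - eta) * model_decrease k" .
qed

lemma f_plus_r_ge_inf: "z \<in> X \<Longrightarrow> 0 \<le> f z - f_inf + r z"
  using f_lb r_nonneg by (smt (verit))

lemma shifted_merit_nonneg: "0 \<le> shifted_merit k"
  unfolding shifted_merit_def
  using f_plus_r_ge_inf[of "x k"] X_iter tau_nonneg[of k] by simp

lemma shifted_merit_Suc_le:
  "shifted_merit (Suc k) \<le> shifted_merit k - (if accepted k then eta * model_decrease k else 0)"
proof -
  have "0 \<le> f (x (Suc k)) - f_inf + r (x (Suc k))"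
    using f_plus_r_ge_inf X_iter by blast
  from mult_right_mono[OF tau_Suc_le[of k] this]
  have "shifted_merit (Suc k) \<le> tau k * (f (x (Suc k)) - f_inf + r (x (Suc k))) + norm (c (x (Suc k)))"
    unfolding shifted_merit_def by simp
  also have "\<dots> \<le> shifted_merit k - (if accepted k then eta * model_decrease k else 0)"
  proof (cases "accepted k")
    case True
    then have "x (Suc k) = x k + s k" using accepted_step by blast
    with True show ?thesis unfolding accepted_def merit_def shifted_merit_def by (simp add: algebra_simps)
  next
    case False
    then have "x (Suc k) = x k" using rejected_step by blast
    with False show ?thesis unfolding shifted_merit_def by simp
  qed
  finally show ?thesis .
qed

lemma alpha_ge_min:
  assumes small_accepted: "\<And>k. N \<le> k \<Longrightarrow> alpha k \<le> a \<Longrightarrow> accepted k" and "N \<le> k"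
  shows "min (alpha N) (xi * a) \<le> alpha k"
  using \<open>N \<le> k\<close>
proof (induction k rule: dec_induct)
  case (step k)
  show ?case
  proof (cases "accepted k")
    case True then show ?thesis using accepted_step[of k] step.IH by simp
  next
    case False
    then have "a < alpha k" using small_accepted step.hyps by force
    with xi have "xi * a \<le> xi * alpha k" by simp
    then show ?thesis using rejected_step[OF False] by (simp add: min_le_iff_disj)
  qed
qed simp

lemma iterations_le:
  assumes "0 < d"
    and decrease: "\<And>k. N \<le> k \<Longrightarrow> k < N + K \<Longrightarrow> accepted k \<Longrightarrow> shifted_merit (Suc k) \<le> shifted_merit k - d"
    and small_accepted: "\<And>k. N \<le> k \<Longrightarrow> alpha k \<le> a \<Longrightarrow> accepted k"
    and B: "alpha N * xi ^ B \<le> a"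
  shows "real K \<le> real B + shifted_merit N / d"
proof -
  have "d * (real K - real B) \<le> shifted_merit (N + 0) - shifted_merit (N + K)"
  proof (rule accepted_rejected_count[where a = "\<lambda>j. alpha (N + j)" and acc = "\<lambda>j. accepted (N + j)"])
    fix j assume "j < K"
    show "accepted (N + j) \<Longrightarrow> alpha (N + Suc j) = alpha (N + j)
        \<and> shifted_merit (N + Suc j) \<le> shifted_merit (N + j) - d"
      using accepted_step decrease \<open>j < K\<close> by simp
    show "\<not> accepted (N + j) \<Longrightarrow> alpha (N + Suc j) = xi * alpha (N + j)
        \<and> shifted_merit (N + Suc j) \<le> shifted_merit (N + j) \<and> a < alpha (N + j)"
      using rejected_step shifted_merit_Suc_le[of "N + j"] small_accepted[of "N + j"] by force
  qed (use B xi alpha_pos \<open>0 < d\<close> in auto)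
  with shifted_merit_nonneg[of "N + K"] \<open>0 < d\<close> show ?thesis
    by (simp add: field_simps)
qed

lemma accepted_if_alpha_le_tau_bound:
  assumes "0 < t" "t \<le> tau k" "alpha k \<le> t / (t * L_g + L_J)"
  shows "accepted k"
proof (rule accepted_if_alpha_le)
  have pos: "0 < t * L_g + L_J" "0 < tau k * L_g + L_J"
    using assms consts_pos by (simp_all add: add_pos_pos)
  have "t * L_J \<le> tau k * L_J" using assms consts_pos by simp
  then have "t / (t * L_g + L_J) \<le> tau k / (tau k * L_g + L_J)"
    using pos by (simp add: field_simps)
  with assms(3) have "alpha k \<le> tau k / (tau k * L_g + L_J)" by linarith
  with pos(2) show "alpha k * (tau k * L_g + L_J) \<le> tau k"
    by (simp add: le_divide_eq)
qed

definition "alpha_min t = min (alpha 0) (xi * t / (t * L_g + L_J))"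
definition "kappa_Phi t = eta * min (min (sigma_u * t * alpha_min t)
    (sigma_c / (2 * kappa_c * (1 + kappa_gc\<^sup>2)))) (sigma_c * kappa_v * alpha_min t / (2 * kappa_c))"

lemma alpha_min_pos: "0 < t \<Longrightarrow> 0 < alpha_min t"
  using alpha0 xi consts_pos by (simp add: alpha_min_def add_pos_pos)

lemma alpha_min_L_g_le_1: "0 < t \<Longrightarrow> alpha_min t * L_g \<le> 1"
proof -
  assume "0 < t"
  then have pos: "0 < t * L_g + L_J" using consts_pos by (simp add: add_pos_pos)
  have "xi * (t * L_g) \<le> 1 * (t * L_g)"
    using xi \<open>0 < t\<close> consts_pos by (intro mult_right_mono) auto
  then have "xi * (t * L_g) \<le> t * L_g + L_J"
    using consts_pos by linarith
  then have "xi * t / (t * L_g + L_J) * L_g \<le> 1"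
    using pos by (simp add: mult_ac)
  moreover have "alpha_min t * L_g \<le> xi * t / (t * L_g + L_J) * L_g"
    using consts_pos by (intro mult_right_mono) (auto simp: alpha_min_def)
  ultimately show ?thesis by linarith
qed

lemma alpha_ge_alpha_min:
  assumes "0 < t" "\<forall>k. t \<le> tau k"
  shows "alpha_min t \<le> alpha k"
  using alpha_ge_min[of 0 "t / (t * L_g + L_J)" k] accepted_if_alpha_le_tau_bound assms
  by (simp add: alpha_min_def)

lemma kappa_Phi_pos: "0 < t \<Longrightarrow> 0 < kappa_Phi t"
  using eta su alpha_min_pos sc kv consts_pos by (simp add: kappa_Phi_def add_pos_nonneg)

lemma kappa_Phi_le_u: "0 < t \<Longrightarrow> kappa_Phi t \<le> sigma_u * t * alpha_min t"
proof -
  assume "0 < t"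
  have "kappa_Phi t \<le> eta * (sigma_u * t * alpha_min t)"
    using eta by (simp add: kappa_Phi_def)
  also have "\<dots> \<le> sigma_u * t * alpha_min t"
    using eta su \<open>0 < t\<close> alpha_min_pos[OF \<open>0 < t\<close>] by (intro mult_left_le_one_le) auto
  finally show ?thesis .
qed

lemma kappa_Phi_le_c: "kappa_Phi t \<le> 1 / (2 * kappa_c * (1 + kappa_gc\<^sup>2))"
proof -
  have pos: "0 < 2 * kappa_c * (1 + kappa_gc\<^sup>2)"
    using consts_pos by (simp add: add_pos_nonneg)
  have "kappa_Phi t \<le> eta * (sigma_c / (2 * kappa_c * (1 + kappa_gc\<^sup>2)))"
    unfolding kappa_Phi_def using eta by (intro mult_left_mono) auto
  also have "\<dots> \<le> 1 * (1 / (2 * kappa_c * (1 + kappa_gc\<^sup>2)))"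
    using eta sc pos by (intro mult_mono divide_right_mono) auto
  finally show ?thesis by simp
qed

lemma chi_sq_le: "(chi k)\<^sup>2 \<le> (norm (u k) / alpha k)\<^sup>2 + (norm (JTc k))\<^sup>2"
  unfolding chi_def norm_stationarity_residual by (simp add: max_def)

lemma model_decrease_ge_chi:
  assumes "0 < t" "\<forall>k. t \<le> tau k"
  shows "kappa_Phi t * (chi k)\<^sup>2 \<le> eta * model_decrease k"
proof -
  define a where "a = alpha_min t"
  define m1 where "m1 = sigma_u * t * a"
  define m2 where "m2 = sigma_c / (2 * kappa_c * (1 + kappa_gc\<^sup>2))"
  define m3 where "m3 = sigma_c * kappa_v * a / (2 * kappa_c)"
  define q1 where "q1 = norm (u k) / alpha k"
  have a: "0 < a" "a \<le> alpha k"
    using alpha_min_pos alpha_ge_alpha_min assms by (auto simp: a_def)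
  have "t * a \<le> tau k * alpha k"
    using assms a tau_nonneg[of k] by (intro mult_mono) auto
  then have "m1 * q1\<^sup>2 \<le> sigma_u * (tau k * alpha k) * q1\<^sup>2"
    unfolding m1_def using su by (intro mult_right_mono) (auto simp: mult.assoc)
  also have "\<dots> = tau k * sigma_u * (norm (u k))\<^sup>2 / alpha k"
    using alpha_pos[of k] by (simp add: q1_def power2_eq_square field_simps)
  also have "\<dots> \<le> tau k * sigma_u * (norm (s k))\<^sup>2 / alpha k"
    using norm_u_le_norm_s[of k] tau_nonneg[of k] su alpha_pos[of k]
    by (intro divide_right_mono mult_left_mono power_mono) auto
  finally have u_part: "m1 * q1\<^sup>2 \<le> tau k * sigma_u * (norm (s k))\<^sup>2 / alpha k" .
  have eq: "sigma_c * min (1 / (1 + kappa_gc\<^sup>2)) (kappa_v * a) / (2 * kappa_c) = min m2 m3"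
    using sc consts_pos
    by (simp add: m2_def m3_def min_mult_distrib_left min_divide_distrib_right mult_ac)
  have "min m2 m3 * (norm (JTc k))\<^sup>2
      = sigma_c * ((norm (JTc k))\<^sup>2 * min (1 / (1 + kappa_gc\<^sup>2)) (kappa_v * a) / (2 * kappa_c))"
    unfolding eq[symmetric] by (simp add: mult_ac)
  also have "\<dots> \<le> sigma_c * feas_decrease k"
    using feas_decrease_ge[of a k] a sc by (intro mult_left_mono) auto
  finally have c_part: "min m2 m3 * (norm (JTc k))\<^sup>2 \<le> sigma_c * feas_decrease k" .
  define m where "m = min (min m1 m2) m3"
  have "0 \<le> m"
    using su sc kv a consts_pos assms by (simp add: m_def m1_def m2_def m3_def add_pos_nonneg)
  then have "m * (chi k)\<^sup>2 \<le> m * q1\<^sup>2 + m * (norm (JTc k))\<^sup>2"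
    using mult_left_mono[OF chi_sq_le] by (simp add: q1_def distrib_left)
  also have "\<dots> \<le> m1 * q1\<^sup>2 + min m2 m3 * (norm (JTc k))\<^sup>2"
    by (intro add_mono mult_right_mono) (auto simp: m_def)
  also have "\<dots> \<le> model_decrease k"
    using u_part c_part model_decrease_ge[of k] by linarith
  finally show ?thesis
    using eta by (simp add: kappa_Phi_def m_def m1_def m2_def m3_def a_def mult.assoc)
qed

lemma shifted_merit_ge_along_step:
  assumes "0 \<le> \<theta>" "\<theta> \<le> 1"
  shows "\<theta> * tau k * ((sigma_u + 1/2) * (norm (s k))\<^sup>2 / alpha k - L_g * \<theta> * (norm (s k))\<^sup>2 / 2)
    \<le> shifted_merit k"
proof -
  have xX: "x k \<in> X" and sX: "x k + s k \<in> X" using X_iter by auto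
  \<comment> \<open>At \<open>z\<close>, \<open>f + r \<ge> f_inf\<close>; bound \<open>f z\<close> by the descent lemma and \<open>r z\<close> by convexity.\<close>
  define z where "z = x k + \<theta> *\<^sub>R s k"
  have z_eq: "z = (1 - \<theta>) *\<^sub>R x k + \<theta> *\<^sub>R (x k + s k)"
    by (simp add: z_def algebra_simps)
  have zX: "z \<in> X" using convexD_alt[OF X_convex xX sX assms] z_eq by simp
  have "f z \<le> f (x k) + \<theta> * (g (x k) \<bullet> s k) + L_g / 2 * (\<theta>\<^sup>2 * (norm (s k))\<^sup>2)"
    using lipschitz_gradient_upper_bound[OF _ X_convex xX zX, of f g L_g] f_deriv g_lip consts_pos assms
    by (simp add: z_def power_mult_distrib)
  moreover have "r z \<le> (1 - \<theta>) * r (x k) + \<theta> * r (x k + s k)"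
    using convex_onD[OF r_convex assms] z_eq by simp
  moreover have "f_inf \<le> f z" "0 \<le> r z" using f_lb zX r_nonneg by auto
  ultimately have fr: "\<theta> * (r (x k) - g (x k) \<bullet> s k - r (x k + s k)) - L_g * \<theta>\<^sup>2 * (norm (s k))\<^sup>2 / 2
      \<le> f (x k) - f_inf + r (x k)"
    by (simp add: algebra_simps)
  have "tau k * D k \<le> (1 - sigma_c) * feas_decrease k" by (rule tau_D_le)
  also have "\<dots> \<le> feas_decrease k"
    using sc feas_decrease_nonneg[of k] by (intro mult_left_le_one_le) auto
  also have "\<dots> \<le> norm (c (x k))" by (simp add: feas_decrease_def)
  finally have tD: "tau k * D k \<le> norm (c (x k))" .
  have "\<theta> * (tau k * D k) \<le> norm (c (x k))"
  proof (cases "0 \<le> tau k * D k")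
    case True
    with tD mult_left_le_one_le[OF True assms] show ?thesis by linarith
  next
    case False
    with assms have "\<theta> * (tau k * D k) \<le> 0" by (simp add: mult_nonneg_nonpos)
    then show ?thesis using norm_ge_zero[of "c (x k)"] by linarith
  qed
  with mult_left_mono[OF fr tau_nonneg[of k]] show ?thesis
    unfolding shifted_merit_def D_def by (simp add: algebra_simps power2_eq_square)
qed

lemma shifted_merit_ge_u:
  assumes "0 < a" "a \<le> alpha k" "a * L_g \<le> 1"
  shows "sigma_u * tau k * a * (norm (u k))\<^sup>2 / (alpha k)\<^sup>2 \<le> shifted_merit k"
proof -
  define S where "S = (norm (s k))\<^sup>2"
  have ak: "0 < alpha k" by (rule alpha_pos)
  have "sigma_u \<le> sigma_u + 1/2 - L_g * a / 2"
    using assms(3) by (simp add: mult.commute)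
  moreover have "0 \<le> tau k * a * S / (alpha k)\<^sup>2"
    using tau_nonneg[of k] assms by (simp add: S_def)
  ultimately have "tau k * a * S / (alpha k)\<^sup>2 * sigma_u
      \<le> tau k * a * S / (alpha k)\<^sup>2 * (sigma_u + 1/2 - L_g * a / 2)"
    by (rule mult_left_mono)
  also have "\<dots> = a / alpha k * tau k * ((sigma_u + 1/2) * S / alpha k - L_g * (a / alpha k) * S / 2)"
    using ak by (simp add: field_simps power2_eq_square)
  also have "\<dots> \<le> shifted_merit k"
    unfolding S_def using assms ak by (intro shifted_merit_ge_along_step) auto
  finally have "sigma_u * tau k * a * S / (alpha k)\<^sup>2 \<le> shifted_merit k"
    by (simp add: mult_ac)
  moreover have "sigma_u * tau k * a * (norm (u k))\<^sup>2 / (alpha k)\<^sup>2 \<le> sigma_u * tau k * a * S / (alpha k)\<^sup>2"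
    unfolding S_def using norm_u_le_norm_s[of k] su tau_nonneg[of k] assms
    by (intro divide_right_mono mult_left_mono power_mono) auto
  ultimately show ?thesis by linarith
qed

lemma norm_JTc_sq_le_shifted_merit: "(norm (JTc k))\<^sup>2 \<le> kappa_gc\<^sup>2 * kappa_c * shifted_merit k"
proof -
  have "(norm (JTc k))\<^sup>2 \<le> (kappa_gc * norm (c (x k)))\<^sup>2"
    using norm_JTc_le[of k] by (intro power_mono) auto
  also have "\<dots> = kappa_gc\<^sup>2 * norm (c (x k)) * norm (c (x k))"
    by (simp add: power2_eq_square)
  also have "\<dots> \<le> kappa_gc\<^sup>2 * norm (c (x k)) * kappa_c"
    using c_bd X_iter by (intro mult_left_mono) auto
  also have "\<dots> = kappa_gc\<^sup>2 * kappa_c * norm (c (x k))"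
    by (simp add: mult_ac)
  also have "\<dots> \<le> kappa_gc\<^sup>2 * kappa_c * shifted_merit k"
    using f_plus_r_ge_inf[of "x k"] X_iter tau_nonneg[of k] consts_pos
    by (intro mult_left_mono) (auto simp: shifted_merit_def)
  finally show ?thesis .
qed

text \<open>Only needed when the floor in the iteration bound vanishes: then \<open>k = 0\<close> must already do.\<close>
lemma shifted_merit_ge_chi:
  assumes "0 < t" "\<forall>k. t \<le> tau k"
  shows "kappa_Phi t * (chi k)\<^sup>2 \<le> shifted_merit k"
proof -
  define a where "a = alpha_min t"
  have a: "0 < a" "a \<le> alpha k" "a * L_g \<le> 1"
    using alpha_min_pos alpha_ge_alpha_min alpha_min_L_g_le_1 assms by (auto simp: a_def)
  have "kappa_Phi t * (norm (u k) / alpha k)\<^sup>2 \<le> sigma_u * tau k * a * (norm (u k) / alpha k)\<^sup>2"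
  proof (rule mult_right_mono)
    have "sigma_u * t * a \<le> sigma_u * tau k * a"
      using su assms a by (intro mult_right_mono mult_left_mono) auto
    with kappa_Phi_le_u[OF assms(1)] show "kappa_Phi t \<le> sigma_u * tau k * a"
      by (simp add: a_def)
  qed simp
  also have "\<dots> = sigma_u * tau k * a * (norm (u k))\<^sup>2 / (alpha k)\<^sup>2"
    by (simp add: power_divide)
  also have "\<dots> \<le> shifted_merit k" using shifted_merit_ge_u[OF a] .
  finally have u_part: "kappa_Phi t * (norm (u k) / alpha k)\<^sup>2 \<le> shifted_merit k" .
  have "kappa_Phi t * (norm (JTc k))\<^sup>2
      \<le> 1 / (2 * kappa_c * (1 + kappa_gc\<^sup>2)) * (kappa_gc\<^sup>2 * kappa_c * shifted_merit k)"
    using kappa_Phi_le_c norm_JTc_sq_le_shifted_merit[of k] kappa_Phi_pos[OF assms(1)] consts_pos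
    by (intro mult_mono) auto
  also have "\<dots> \<le> shifted_merit k"
    using consts_pos shifted_merit_nonneg[of k] by (simp add: field_simps add_pos_nonneg)
  finally have c_part: "kappa_Phi t * (norm (JTc k))\<^sup>2 \<le> shifted_merit k" .
  have "(chi k)\<^sup>2 = max ((norm (u k) / alpha k)\<^sup>2) ((norm (JTc k))\<^sup>2)"
    using alpha_pos[of k] unfolding chi_def norm_stationarity_residual
    by (auto simp: max_def power_mono_iff)
  with u_part c_part show ?thesis by (simp add: max_def)
qed

lemma alpha_0_mult_xi_pow_le:
  assumes "0 < t"
  shows "alpha 0 * xi ^ nat \<lceil>ln (t / (alpha 0 * (t * L_g + L_J))) / ln xi\<rceil> \<le> t / (t * L_g + L_J)"
proof -
  define q where "q = t / (alpha 0 * (t * L_g + L_J))"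
  have "0 < t * L_g + L_J" using assms consts_pos by (simp add: add_pos_pos)
  then have "xi ^ nat \<lceil>ln q / ln xi\<rceil> \<le> q"
    using xi assms alpha0 by (intro power_nat_ceiling_log_le) (auto simp: q_def)
  then show ?thesis
    using alpha0 mult_left_mono[of "xi ^ nat \<lceil>ln q / ln xi\<rceil>" q "alpha 0"] by (simp add: q_def)
qed

lemma shifted_merit_decrease_if_chi_gt:
  assumes "0 < t" "\<forall>k. t \<le> tau k" "0 \<le> \<epsilon>" "\<epsilon> < chi k" "accepted k"
  shows "shifted_merit (Suc k) \<le> shifted_merit k - kappa_Phi t * \<epsilon>\<^sup>2"
proof -
  have "\<epsilon>\<^sup>2 \<le> (chi k)\<^sup>2" using assms(3,4) by (intro power_mono) auto
  then have "kappa_Phi t * \<epsilon>\<^sup>2 \<le> kappa_Phi t * (chi k)\<^sup>2"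
    using kappa_Phi_pos[OF assms(1)] by simp
  with model_decrease_ge_chi[OF assms(1,2), of k] shifted_merit_Suc_le[of k] assms(5)
  show ?thesis by simp
qed

lemma chi_le_within:
  assumes "0 < t" "\<forall>k. t \<le> tau k" "0 < \<epsilon>"
  shows "\<exists>k. int k \<le> (max 0 \<lceil>ln (t / (alpha 0 * (t * L_g + L_J))) / ln xi\<rceil> + 1)
      * \<lfloor>shifted_merit 0 / (kappa_Phi t * \<epsilon>\<^sup>2)\<rfloor> \<and> chi k \<le> \<epsilon>"
proof -
  define B where "B = nat \<lceil>ln (t / (alpha 0 * (t * L_g + L_J))) / ln xi\<rceil>"
  define d where "d = kappa_Phi t * \<epsilon>\<^sup>2"
  define M where "M = \<lfloor>shifted_merit 0 / d\<rfloor>"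
  have "0 < d" using kappa_Phi_pos assms by (simp add: d_def)
  have "0 \<le> M" using shifted_merit_nonneg[of 0] \<open>0 < d\<close> by (simp add: M_def)
  show ?thesis
  proof (cases "M = 0")
    case True
    then have "shifted_merit 0 < d" using \<open>0 < d\<close> by (simp add: M_def floor_eq_iff divide_less_eq)
    with shifted_merit_ge_chi[OF assms(1,2), of 0] have "kappa_Phi t * (chi 0)\<^sup>2 < kappa_Phi t * \<epsilon>\<^sup>2"
      by (simp add: d_def)
    then have "chi 0 \<le> \<epsilon>"
      using kappa_Phi_pos[OF assms(1)] assms(3) by (simp add: power_less_imp_less_base less_imp_le)
    then show ?thesis using True by (intro exI[of _ 0]) (simp add: M_def d_def)
  next
    case False
    have "\<exists>k\<le>B + nat M. chi k \<le> \<epsilon>"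
    proof (rule ccontr)
      assume "\<not> ?thesis"
      then have big: "\<And>k. k \<le> B + nat M \<Longrightarrow> \<epsilon> < chi k" by force
      have "real (Suc (B + nat M)) \<le> real B + shifted_merit 0 / d"
      proof (rule iterations_le[OF \<open>0 < d\<close> _ _ alpha_0_mult_xi_pow_le[OF assms(1), folded B_def]])
        show "shifted_merit (Suc k) \<le> shifted_merit k - d"
          if "0 \<le> k" "k < 0 + Suc (B + nat M)" "accepted k" for k
        proof -
          have "\<epsilon> < chi k" using big that(2) by simp
          from shifted_merit_decrease_if_chi_gt[OF assms(1,2) less_imp_le[OF assms(3)] this that(3)]
          show ?thesis by (simp add: d_def)
        qed
        show "accepted k" if "0 \<le> k" "alpha k \<le> t / (t * L_g + L_J)" for k
          using accepted_if_alpha_le_tau_bound assms that by blast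
      qed
      moreover have "shifted_merit 0 / d < M + 1" by (simp add: M_def)
      ultimately show False using \<open>0 \<le> M\<close> by linarith
    qed
    then obtain k where k: "k \<le> B + nat M" "chi k \<le> \<epsilon>" by blast
    have "int B * 1 \<le> int B * M" using False \<open>0 \<le> M\<close> by (intro mult_left_mono) auto
    then have "int k \<le> (int B + 1) * M"
      using k(1) \<open>0 \<le> M\<close> by (simp add: distrib_right)
    moreover have "int B = max 0 \<lceil>ln (t / (alpha 0 * (t * L_g + L_J))) / ln xi\<rceil>"
      by (simp add: B_def max_def)
    ultimately show ?thesis using k(2) unfolding M_def d_def by auto
  qed
qed

lemma accepted_if_JTc_ge:
  assumes "0 < \<delta>"
  shows "\<exists>a>0. \<forall>k. \<delta> \<le> norm (JTc k) \<longrightarrow> alpha k \<le> a \<longrightarrow> accepted k"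
proof -
  define K where "K = (kappa_gf + kappa_dr)\<^sup>2 + (kappa_v * kappa_gc * kappa_c)\<^sup>2"
  define L where "L = tau_m1 * L_g + L_J"
  define a where "a = min (1 / (kappa_v * (1 + kappa_gc\<^sup>2))) ((1 - eta) * sigma_c * \<delta>\<^sup>2 * kappa_v / (kappa_c * L * K))"
  have "0 < K" "0 < L" using consts_pos taum1 by (simp_all add: K_def L_def add_pos_nonneg add_pos_pos)
  have "0 < a" using assms kv eta sc consts_pos \<open>0 < K\<close> \<open>0 < L\<close> by (simp add: a_def add_pos_nonneg)
  moreover have "accepted k" if JTc: "\<delta> \<le> norm (JTc k)" and ak: "alpha k \<le> a" for k
  proof (rule accepted_if_model_error_le)
    have apos: "0 < alpha k" by (rule alpha_pos)
    have "kappa_v * alpha k \<le> 1 / (1 + kappa_gc\<^sup>2)"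
      using ak kv by (simp add: a_def field_simps add_pos_nonneg)
    then have "\<delta>\<^sup>2 * (kappa_v * alpha k) / (2 * kappa_c)
        \<le> (norm (JTc k))\<^sup>2 * min (1 / (1 + kappa_gc\<^sup>2)) (kappa_v * alpha k) / (2 * kappa_c)"
      using JTc assms kv apos consts_pos
      by (simp add: min_absorb2 divide_right_mono mult_right_mono power_mono)
    from order_trans[OF mult_left_mono[OF this] model_decrease_ge_JTc[of "alpha k" k]] sc apos
    have dq: "sigma_c * (\<delta>\<^sup>2 * (kappa_v * alpha k) / (2 * kappa_c)) \<le> model_decrease k"
      by simp
    have "alpha k * (kappa_c * L * K) \<le> (1 - eta) * sigma_c * \<delta>\<^sup>2 * kappa_v"
      using ak consts_pos \<open>0 < L\<close> \<open>0 < K\<close> by (simp add: a_def le_divide_eq)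
    from mult_left_mono[OF this less_imp_le[OF apos]]
    have "L * ((alpha k)\<^sup>2 * K) / 2 \<le> (1 - eta) * (sigma_c * (\<delta>\<^sup>2 * (kappa_v * alpha k) / (2 * kappa_c)))"
      using consts_pos by (simp add: field_simps power2_eq_square)
    also have "\<dots> \<le> (1 - eta) * model_decrease k"
      using dq eta by (intro mult_left_mono) auto
    finally show "(tau k * L_g + L_J - tau k / alpha k) * (norm (s k))\<^sup>2 / 2 \<le> (1 - eta) * model_decrease k"
      using model_error_le[of k] by (simp add: L_def K_def)
  qed
  ultimately show ?thesis by blast
qed

lemma shifted_merit_decrease_if_JTc_ge:
  assumes "0 \<le> a" "a \<le> alpha k" "0 \<le> \<delta>" "\<delta> \<le> norm (JTc k)" "accepted k"
  shows "shifted_merit (Suc k)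
    \<le> shifted_merit k - eta * (sigma_c * (\<delta>\<^sup>2 * min (1 / (1 + kappa_gc\<^sup>2)) (kappa_v * a) / (2 * kappa_c)))"
proof -
  have "\<delta>\<^sup>2 \<le> (norm (JTc k))\<^sup>2" using assms(3,4) by (intro power_mono) auto
  then have "\<delta>\<^sup>2 * min (1 / (1 + kappa_gc\<^sup>2)) (kappa_v * a) / (2 * kappa_c)
      \<le> (norm (JTc k))\<^sup>2 * min (1 / (1 + kappa_gc\<^sup>2)) (kappa_v * a) / (2 * kappa_c)"
    using kv assms(1) consts_pos by (intro divide_right_mono mult_right_mono) (auto simp: add_pos_nonneg)
  from order_trans[OF mult_left_mono[OF this] model_decrease_ge_JTc[OF assms(1,2)]] sc
  have "sigma_c * (\<delta>\<^sup>2 * min (1 / (1 + kappa_gc\<^sup>2)) (kappa_v * a) / (2 * kappa_c)) \<le> model_decrease k"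
    by simp
  with eta have "eta * (sigma_c * (\<delta>\<^sup>2 * min (1 / (1 + kappa_gc\<^sup>2)) (kappa_v * a) / (2 * kappa_c)))
      \<le> eta * model_decrease k"
    by (intro mult_left_mono) auto
  with shifted_merit_Suc_le[of k] assms(5) show ?thesis by simp
qed

lemma JTc_frequently_small:
  assumes "0 < \<delta>"
  shows "\<exists>k\<ge>N. norm (JTc k) < \<delta>"
proof (rule ccontr)
  assume "\<not> ?thesis"
  then have big: "\<And>k. N \<le> k \<Longrightarrow> \<delta> \<le> norm (JTc k)" by (meson not_le)
  obtain a where "0 < a" and small_accepted: "\<And>k. \<delta> \<le> norm (JTc k) \<Longrightarrow> alpha k \<le> a \<Longrightarrow> accepted k"
    using accepted_if_JTc_ge[OF assms] by blast
  have small_accepted': "accepted k" if "N \<le> k" "alpha k \<le> a" for k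
    using small_accepted big that by blast
  define a' where "a' = min (alpha N) (xi * a)"
  have "0 < a'" using alpha_pos \<open>0 < a\<close> xi by (simp add: a'_def)
  have a': "a' \<le> alpha k" if "N \<le> k" for k
    unfolding a'_def using alpha_ge_min[OF small_accepted' that] .
  define d where "d = eta * (sigma_c * (\<delta>\<^sup>2 * min (1 / (1 + kappa_gc\<^sup>2)) (kappa_v * a') / (2 * kappa_c)))"
  have "0 < d"
    using eta sc assms kv \<open>0 < a'\<close> consts_pos by (simp add: d_def add_pos_nonneg)
  have decrease: "shifted_merit (Suc k) \<le> shifted_merit k - d" if "N \<le> k" "accepted k" for k
    unfolding d_def using \<open>0 < a'\<close> a' assms big that
    by (intro shifted_merit_decrease_if_JTc_ge) auto
  obtain B where "xi ^ B < a / alpha N"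
    using real_arch_pow_inv[of "a / alpha N" xi] \<open>0 < a\<close> alpha_pos[of N] xi by auto
  then have B: "alpha N * xi ^ B \<le> a" using alpha_pos[of N] by (simp add: field_simps)
  define K where "K = B + nat \<lceil>shifted_merit N / d\<rceil> + 1"
  have "real K \<le> real B + shifted_merit N / d"
    using iterations_le[OF \<open>0 < d\<close> decrease small_accepted' B] by blast
  moreover have "real B + shifted_merit N / d < real K"
    using real_nat_ceiling_ge[of "shifted_merit N / d"] by (simp add: K_def)
  ultimately show False by linarith
qed

lemma JTc_subseq_tendsto_0: "\<exists>\<phi>::nat \<Rightarrow> nat. strict_mono \<phi> \<and> (\<lambda>i. norm (JTc (\<phi> i))) \<longlonglongrightarrow> 0"
proof -
  have "\<exists>\<phi>. \<forall>n. norm (JTc (\<phi> n)) < 1 / real (Suc n) \<and> \<phi> n < \<phi> (Suc n)"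
  proof (rule dependent_nat_choice)
    show "\<exists>k. norm (JTc k) < 1 / real (Suc 0)"
      using JTc_frequently_small[of 1 0] by auto
    show "\<exists>k'. norm (JTc k') < 1 / real (Suc (Suc n)) \<and> k < k'" for k n
      using JTc_frequently_small[of "1 / real (Suc (Suc n))" "Suc k"] by auto
  qed
  then obtain \<phi> where \<phi>: "\<And>n. norm (JTc (\<phi> n)) < 1 / real (Suc n)" "\<And>n. \<phi> n < \<phi> (Suc n)"
    by blast
  have "strict_mono \<phi>" using \<phi>(2) by (simp add: strict_mono_Suc_iff)
  moreover have "(\<lambda>i. norm (JTc (\<phi> i))) \<longlonglongrightarrow> 0"
    by (rule LIMSEQ_norm_0) (use \<phi>(1) in simp)
  ultimately show ?thesis by blast
qed

lemma tau_dichotomy: "(\<exists>t>0. \<forall>k. t \<le> tau k) \<or> tau \<longlonglongrightarrow> 0"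
proof -
  have bdd: "bdd_below (range tau)" using tau_nonneg by (auto simp: bdd_below_def)
  define t where "t = (INF k. tau k)"
  have "tau \<longlonglongrightarrow> t" unfolding t_def by (rule LIMSEQ_decseq_INF[OF bdd decseq_tau])
  moreover have "\<forall>k. t \<le> tau k" unfolding t_def using bdd by (auto intro: cINF_lower)
  moreover have "0 \<le> t" unfolding t_def by (rule cINF_greatest) (auto simp: tau_nonneg)
  ultimately show ?thesis by (cases "0 < t") auto
qed

end

theorem theorem3p19:
  fixes f :: "real^'n \<Rightarrow> real" and g :: "real^'n \<Rightarrow> real^'n"
    and c :: "real^'n \<Rightarrow> real^'m" and J :: "real^'n \<Rightarrow> real^'n^'m"
    and r :: "real^'n \<Rightarrow> real"
    and x v u s gr :: "nat \<Rightarrow> real^'n" and y :: "nat \<Rightarrow> real^'m"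
    and alpha tau betac :: "nat \<Rightarrow> real"
    and tau_m1 kappa_v sigma_c eps_tau xi eta sigma_u :: real
    and X :: "(real^'n) set"
    and f_inf kappa_gf kappa_c kappa_gc kappa_dr L_g L_J :: real
  assumes mn: "CARD('m) \<le> CARD('n)"
    and f_deriv: "\<forall>z. GDERIV f z :> g z" and g_cont: "continuous_on UNIV g"
    and c_deriv: "\<forall>z. (c has_derivative (\<lambda>h. J z *v h)) (at z)"
    and J_cont: "continuous_on UNIV J"
    and r_nonneg: "\<forall>z. r z \<ge> 0" and r_convex: "convex_on UNIV r"
    and alpha0: "alpha 0 > 0" and taum1: "tau_m1 > 0"
    and kv: "kappa_v > 0"
    and sc: "0 < sigma_c" "sigma_c < 1"
    and et: "0 < eps_tau" "eps_tau < 1"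
    and xi: "0 < xi" "xi < 1"
    and eta: "0 < eta" "eta < 1"
    and su: "0 < sigma_u" "sigma_u \<le> 1/2"
    and step1a: "\<forall>k. transpose (J (x k)) *v c (x k) \<noteq> 0 \<longrightarrow>
        v k \<in> range (\<lambda>w. transpose (J (x k)) *v w)
      \<and> norm (v k) \<le> kappa_v * alpha k * norm (transpose (J (x k)) *v c (x k))
      \<and> 0 \<le> betac k \<and> betac k \<le> kappa_v * alpha k
      \<and> (\<forall>\<beta>. 0 \<le> \<beta> \<and> \<beta> \<le> kappa_v * alpha k \<longrightarrow>
            (1/2) * (norm (c (x k) - betac k *\<^sub>R (J (x k) *v (transpose (J (x k)) *v c (x k)))))\<^sup>2
          \<le> (1/2) * (norm (c (x k) - \<beta> *\<^sub>R (J (x k) *v (transpose (J (x k)) *v c (x k)))))\<^sup>2)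
      \<and> norm (c (x k) + J (x k) *v v k)
          \<le> norm (c (x k) + J (x k) *v (- (betac k *\<^sub>R (transpose (J (x k)) *v c (x k)))))"
    and step1b: "\<forall>k. transpose (J (x k)) *v c (x k) = 0 \<longrightarrow> v k = 0 \<and> c (x k) = 0"
    and step2: "\<forall>k. J (x k) *v u k = 0 \<and>
       (\<forall>w. J (x k) *v w = 0 \<longrightarrow>
          g (x k) \<bullet> u k + (norm (u k))\<^sup>2 / (2 * alpha k) + r (x k + v k + u k)
          \<le> g (x k) \<bullet> w + (norm w)\<^sup>2 / (2 * alpha k) + r (x k + v k + w))"
    and s_def: "\<forall>k. s k = v k + u k" and s_nz: "\<forall>k. s k \<noteq> 0"
    and opt: "\<forall>k. gr k \<in> subdiff r (x k + s k) \<and>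
       g (x k) + (1 / alpha k) *\<^sub>R u k + gr k - transpose (J (x k)) *v y k = 0"
    and step3: "\<forall>k. let tp = (if k = 0 then tau_m1 else tau (k - 1));
          D = g (x k) \<bullet> s k + (sigma_u + 1/2) * (norm (s k))\<^sup>2 / alpha k + r (x k + s k) - r (x k)
        in (if D \<le> 0 then tau k = tp
            else (let tt = (1 - sigma_c) * (norm (c (x k)) - norm (c (x k) + J (x k) *v v k)) / D
                  in tau k = (if tp \<le> tt then tp else min ((1 - eps_tau) * tp) tt)))"
    and step4: "\<forall>k. let dq = - tau k * (g (x k) \<bullet> s k + (norm (s k))\<^sup>2 / (2 * alpha k)
                              + r (x k + s k) - r (x k))
                   + norm (c (x k)) - norm (c (x k) + J (x k) *v s k);
          Phi = (\<lambda>z. tau k * (f z + r z) + norm (c z))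
        in (if Phi (x k + s k) \<le> Phi (x k) - eta * dq
            then x (Suc k) = x k + s k \<and> alpha (Suc k) = alpha k
            else x (Suc k) = x k \<and> alpha (Suc k) = xi * alpha k)"
    and X_open: "open X" and X_convex: "convex X"
    and X_iter: "\<forall>k. x k \<in> X \<and> x k + s k \<in> X"
    and consts_pos: "kappa_gf > 0" "kappa_c > 0" "kappa_gc > 0" "kappa_dr > 0" "L_g > 0" "L_J > 0"
    and f_lb: "\<forall>z\<in>X. f z \<ge> f_inf"
    and g_bd: "\<forall>z\<in>X. norm (g z) \<le> kappa_gf"
    and c_bd: "\<forall>z\<in>X. norm (c z) \<le> kappa_c"
    and J_bd: "\<forall>z\<in>X. onorm (\<lambda>h. J z *v h) \<le> kappa_gc"
    and dr_bd: "\<forall>z\<in>X. \<forall>w\<in>subdiff r z. norm w \<le> kappa_dr"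
    and g_lip: "\<forall>z\<in>X. \<forall>w\<in>X. norm (g z - g w) \<le> L_g * norm (z - w)"
    and J_lip: "\<forall>z\<in>X. \<forall>w\<in>X. onorm (\<lambda>h. (J z - J w) *v h) \<le> L_J * norm (z - w)"
  shows "((\<exists>tmin>0. \<forall>k. tau k \<ge> tmin) \<or> tau \<longlonglongrightarrow> 0)
    \<and> (\<forall>tmin>0. (\<forall>k. tau k \<ge> tmin) \<longrightarrow>
         (let amin = min (alpha 0) (xi * tmin / (tmin * L_g + L_J));
              kPhi = eta * min (min (sigma_u * tmin * amin)
                                    (sigma_c / (2 * kappa_c * (1 + kappa_gc\<^sup>2))))
                               (sigma_c * kappa_v * amin / (2 * kappa_c))
          in (\<forall>k. alpha k \<ge> amin)
           \<and> (\<forall>\<epsilon>>0. \<exists>k. int k \<le>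
                 (max 0 \<lceil>ln (tmin / (alpha 0 * (tmin * L_g + L_J))) / ln xi\<rceil> + 1)
                 * \<lfloor>(tau 0 * (f (x 0) - f_inf + r (x 0)) + norm (c (x 0))) / (kPhi * \<epsilon>\<^sup>2)\<rfloor>
               \<and> max (norm (g (x k) + gr k - transpose (J (x k)) *v y k))
                      (norm (transpose (J (x k)) *v c (x k))) \<le> \<epsilon>)))
    \<and> (tau \<longlonglongrightarrow> 0 \<longrightarrow>
         (\<exists>\<phi>::nat \<Rightarrow> nat. strict_mono \<phi> \<and>
            (\<lambda>i. norm (transpose (J (x (\<phi> i))) *v c (x (\<phi> i)))) \<longlonglongrightarrow> 0))"
proof -
  interpret sqp: proximal_sqp f g c J r x v u s gr y alpha tau betac tau_m1 kappa_v sigma_c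
      eps_tau xi eta sigma_u X f_inf kappa_gf kappa_c kappa_gc kappa_dr L_g L_J
  proof unfold_locales
    show "\<forall>k. J (x k) *v u k = 0" using step2 by blast
  qed (fact assms)+
  show ?thesis
    using sqp.tau_dichotomy sqp.alpha_ge_alpha_min sqp.chi_le_within sqp.JTc_subseq_tendsto_0
    unfolding Let_def sqp.shifted_merit_def sqp.kappa_Phi_def sqp.alpha_min_def sqp.chi_def
      sqp.JTc_def
    by blast
qed

end
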